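(* Let $\omega\ge 4$ be an integer and let $\Gamma$ be a connected finite simple graph. Then $C_\omega(L(\Gamma))\cong\Gamma$ if and only if $\Gamma$ is $\omega$-regular.
   Context: $L(\Gamma)$ is the line graph of $\Gamma$: its vertices are the edges of $\Gamma$, two being adjacent iff they share an endpoint. For a graph $H$ and an integer $\omega$, the $\omega$-clique graph $C_\omega(H)$ is the graph whose vertices are the cliques (vertex sets of complete subgraphs) of order exactly $\omega$ in $H$, two distinct such cliques being adjacent iff they have nonempty intersection. *)

theory Defs
  imports Main
begin

type_synonym 'a graph = "'a set \<times> 'a set set"

definition verts :: "'a graph \<Rightarrow> 'a set" where "verts G = fst G"
definition edges :: "'a graph \<Rightarrow> 'a set set" where "edges G = snd G"

definition simple_graph :: "'a graph \<Rightarrow> bool" where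
  "simple_graph G \<longleftrightarrow> finite (verts G) \<and>
     (\<forall>e\<in>edges G. e \<subseteq> verts G \<and> card e = 2)"

definition adj :: "'a graph \<Rightarrow> 'a \<Rightarrow> 'a \<Rightarrow> bool" where
  "adj G u v \<longleftrightarrow> u \<noteq> v \<and> {u, v} \<in> edges G"

definition connected_graph :: "'a graph \<Rightarrow> bool" where
  "connected_graph G \<longleftrightarrow> verts G \<noteq> {} \<and>
     (\<forall>u\<in>verts G. \<forall>v\<in>verts G. (adj G)\<^sup>*\<^sup>* u v)"

definition degree :: "'a graph \<Rightarrow> 'a \<Rightarrow> nat" where
  "degree G v = card {u \<in> verts G. adj G v u}"

definition regular :: "nat \<Rightarrow> 'a graph \<Rightarrow> bool" where
  "regular k G \<longleftrightarrow> (\<forall>v\<in>verts G. degree G v = k)"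

definition line_graph :: "'a graph \<Rightarrow> 'a set graph" where
  "line_graph G = (edges G, {{e, f} | e f. e \<in> edges G \<and> f \<in> edges G \<and> e \<noteq> f \<and> e \<inter> f \<noteq> {}})"

definition is_clique :: "'a graph \<Rightarrow> 'a set \<Rightarrow> bool" where
  "is_clique H K \<longleftrightarrow> K \<subseteq> verts H \<and> (\<forall>u\<in>K. \<forall>v\<in>K. u \<noteq> v \<longrightarrow> adj H u v)"

definition clique_graph :: "nat \<Rightarrow> 'a graph \<Rightarrow> 'a set graph" where
  "clique_graph \<omega> H =
     (let C = {K. is_clique H K \<and> finite K \<and> card K = \<omega>} in
      (C, {{K, K'} | K K'. K \<in> C \<and> K' \<in> C \<and> K \<noteq> K' \<and> K \<inter> K' \<noteq> {}}))"

definition graph_iso :: "'a graph \<Rightarrow> 'b graph \<Rightarrow> bool" where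
  "graph_iso G H \<longleftrightarrow> (\<exists>f. bij_betw f (verts G) (verts H) \<and>
     (\<forall>u\<in>verts G. \<forall>v\<in>verts G. adj G u v \<longleftrightarrow> adj H (f u) (f v)))"

end

theory Submission
  imports Defs
begin

text \<open>
  Since \<omega> \<ge> 4, a family of \<omega> pairwise intersecting edges has a common endpoint, so the
  \<omega>-cliques of the line graph are exactly the \<omega>-subsets of the edge stars S(v). If the graph
  is \<omega>-regular these are the stars themselves, and v \<mapsto> S(v) is an isomorphism.

  Conversely, let f be an isomorphism from the clique graph onto the graph, and D the maximal
  degree. If D \<ge> \<omega> + 2, an \<omega>-subset of a maximal star has at least \<omega>(D - \<omega>) > D neighbours,
  obtained by exchanging one of its edges. If D = \<omega> + 1, two adjacent vertices of degree
  \<omega> + 1 would produce a clique with 2\<omega> neighbours. So a vertex v of degree \<omega> + 1 has no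
  neighbour of degree \<omega> (otherwise the cliques S(v) - e, for e not joining the two, have
  degree \<omega> + 1 and are pairwise adjacent), hence the \<omega> + 1 cliques S(v) - e form a union
  of components of the clique graph; by connectivity they would be all of it, although the graph
  has more than \<omega> + 1 vertices. Finally, if D \<le> \<omega>, every clique is the star of a vertex of
  degree \<omega>, and counting vertices shows that all vertices have degree \<omega>.
\<close>

definition incident_edges :: "'a graph \<Rightarrow> 'a \<Rightarrow> 'a set set" where
  "incident_edges G v = {e \<in> edges G. v \<in> e}"

abbreviation line_clique_graph :: "nat \<Rightarrow> 'a graph \<Rightarrow> 'a set set graph" where
  "line_clique_graph \<omega> G \<equiv> clique_graph \<omega> (line_graph G)"

lemma card_2_obtain_other:
  assumes "card e = 2" "a \<in> e"
  obtains b where "b \<noteq> a" "e = {a, b}"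
  using assms by (fastforce simp: card_2_iff doubleton_eq_iff)

lemma pairwise_meeting_doubletons_common_point:
  assumes doubletons: "\<And>e. e \<in> K \<Longrightarrow> card e = 2"
    and meet: "\<And>e e'. e \<in> K \<Longrightarrow> e' \<in> K \<Longrightarrow> e \<noteq> e' \<Longrightarrow> e \<inter> e' \<noteq> {}"
    and "4 \<le> card K"
  shows "\<exists>c. \<forall>e\<in>K. c \<in> e"
proof (rule ccontr)
  assume no_common: "\<not> (\<exists>c. \<forall>e\<in>K. c \<in> e)"
  obtain e1 where e1: "e1 \<in> K" using \<open>4 \<le> card K\<close> by fastforce
  then obtain a b where ab: "e1 = {a, b}" "a \<noteq> b" using doubletons card_2_iff by metis
  obtain e2 where e2: "e2 \<in> K" "a \<notin> e2" using no_common by blast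
  obtain e3 where e3: "e3 \<in> K" "b \<notin> e3" using no_common by blast
  have "b \<in> e2" using meet[OF e1 e2(1)] e2(2) ab by blast
  then obtain c where c: "c \<noteq> b" "e2 = {b, c}" using doubletons[OF e2(1)] card_2_obtain_other by metis
  have "a \<in> e3" using meet[OF e1 e3(1)] e3(2) ab by blast
  then obtain c' where c': "c' \<noteq> a" "e3 = {a, c'}" using doubletons[OF e3(1)] card_2_obtain_other by metis
  have "c' = c" using meet[OF e2(1) e3(1)] e2 e3 c c' by auto
  have "K \<subseteq> {{a, b}, {b, c}, {a, c}}"
  proof
    fix e assume e: "e \<in> K"
    obtain x y where xy: "e = {x, y}" "x \<noteq> y" using doubletons[OF e] card_2_iff by metis
    have "e \<inter> e1 \<noteq> {}" "e \<inter> e2 \<noteq> {}" "e \<inter> e3 \<noteq> {}"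
      using meet e e1 e2 e3 \<open>b \<in> e2\<close> \<open>a \<in> e3\<close> by blast+
    then show "e \<in> {{a, b}, {b, c}, {a, c}}"
      using xy ab c c' \<open>c' = c\<close> by (auto simp: doubleton_eq_iff)
  qed
  then have "card K \<le> card {{a, b}, {b, c}, {a, c}}" by (intro card_mono) auto
  also have "\<dots> \<le> 3" by (simp add: card_insert_if)
  finally show False using \<open>4 \<le> card K\<close> by simp
qed

lemma inj_on_exchange: "inj_on (\<lambda>(x, y). insert y (K - {x})) (K \<times> (A - K))"
proof (rule inj_onI, clarify)
  fix x y x' y'
  assume "x \<in> K" "y \<in> A" "y \<notin> K" "x' \<in> K" "y' \<in> A" "y' \<notin> K"
    and eq: "insert y (K - {x}) = insert y' (K - {x'})"
  have "{y} = insert y (K - {x}) - K" "{y'} = insert y' (K - {x'}) - K"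
    "{x} = K - insert y (K - {x})" "{x'} = K - insert y' (K - {x'})"
    using \<open>x \<in> K\<close> \<open>y \<notin> K\<close> \<open>x' \<in> K\<close> \<open>y' \<notin> K\<close> by auto
  then show "x = x' \<and> y = y'" unfolding eq by blast
qed

lemma verts_line_graph: "verts (line_graph G) = edges G"
  by (simp add: line_graph_def verts_def edges_def)

lemma adj_line_graph:
  "adj (line_graph G) e e' \<longleftrightarrow> e \<in> edges G \<and> e' \<in> edges G \<and> e \<noteq> e' \<and> e \<inter> e' \<noteq> {}"
  unfolding adj_def line_graph_def edges_def by (auto simp: doubleton_eq_iff)

lemma verts_clique_graph:
  "verts (clique_graph \<omega> H) = {K. is_clique H K \<and> finite K \<and> card K = \<omega>}"
  by (simp add: clique_graph_def verts_def Let_def)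

lemma adj_clique_graph:
  "adj (clique_graph \<omega> H) K K' \<longleftrightarrow>
     K \<in> verts (clique_graph \<omega> H) \<and> K' \<in> verts (clique_graph \<omega> H) \<and> K \<noteq> K' \<and> K \<inter> K' \<noteq> {}"
  unfolding adj_def clique_graph_def edges_def verts_def Let_def by (auto simp: doubleton_eq_iff)

lemma adj_imp_neq: "adj G u v \<Longrightarrow> u \<noteq> v"
  by (simp add: adj_def)

lemma graph_iso_sym:
  assumes "graph_iso G H"
  shows "graph_iso H G"
proof -
  obtain f where bij: "bij_betw f (verts G) (verts H)"
    and adj: "\<forall>u\<in>verts G. \<forall>v\<in>verts G. adj G u v \<longleftrightarrow> adj H (f u) (f v)"
    using assms unfolding graph_iso_def by blast
  let ?g = "inv_into (verts G) f"
  have "bij_betw ?g (verts H) (verts G)" using bij by (rule bij_betw_inv_into)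
  moreover have "adj H x y \<longleftrightarrow> adj G (?g x) (?g y)" if "x \<in> verts H" "y \<in> verts H" for x y
  proof -
    have "x \<in> f ` verts G" "y \<in> f ` verts G" using bij that by (auto simp: bij_betw_def)
    then show ?thesis using adj by (simp add: f_inv_into_f inv_into_into)
  qed
  ultimately show ?thesis unfolding graph_iso_def by blast
qed

lemma degree_graph_iso:
  assumes bij: "bij_betw f (verts G) (verts H)"
    and adj: "\<forall>u\<in>verts G. \<forall>v\<in>verts G. adj G u v \<longleftrightarrow> adj H (f u) (f v)"
    and x: "x \<in> verts G"
  shows "degree H (f x) = degree G x"
proof -
  have "{v \<in> verts H. adj H (f x) v} = f ` {u \<in> verts G. adj G x u}"
  proof (intro equalityI subsetI)
    fix v assume v: "v \<in> {v \<in> verts H. adj H (f x) v}"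
    then obtain u where "u \<in> verts G" "v = f u" using bij by (auto simp: bij_betw_def)
    then show "v \<in> f ` {u \<in> verts G. adj G x u}" using adj x v by auto
  qed (use bij adj x in \<open>auto simp: bij_betw_def\<close>)
  moreover have "inj_on f {u \<in> verts G. adj G x u}"
    using bij by (auto simp: bij_betw_def intro: inj_on_subset)
  ultimately show ?thesis unfolding degree_def by (simp add: card_image)
qed

lemma connected_graph_closed_superset:
  assumes "connected_graph G" "x \<in> verts G" "x \<in> X"
    and closed: "\<And>y z. y \<in> X \<Longrightarrow> adj G y z \<Longrightarrow> z \<in> X"
  shows "verts G \<subseteq> X"
proof
  fix z assume "z \<in> verts G"
  then have "(adj G)\<^sup>*\<^sup>* x z" using assms unfolding connected_graph_def by blast
  then show "z \<in> X" by induction (use \<open>x \<in> X\<close> closed in blast)+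
qed

section \<open>Edge stars of a simple graph\<close>

context
  fixes G :: "'a graph"
  assumes simple: "simple_graph G"
begin

lemma finite_verts: "finite (verts G)"
  using simple by (simp add: simple_graph_def)

lemma edge_subset_verts: "e \<in> edges G \<Longrightarrow> e \<subseteq> verts G"
  using simple by (simp add: simple_graph_def)

lemma card_edge: "e \<in> edges G \<Longrightarrow> card e = 2"
  using simple by (simp add: simple_graph_def)

lemma finite_edges: "finite (edges G)"
  using finite_verts edge_subset_verts by (metis Pow_iff finite_Pow_iff finite_subset subsetI)

lemma adj_in_verts: "adj G u v \<Longrightarrow> v \<in> verts G"
  using edge_subset_verts by (auto simp: adj_def)

lemma finite_incident_edges: "finite (incident_edges G v)"
  using finite_edges by (simp add: incident_edges_def)

lemma degree_eq_card_incident_edges: "degree G v = card (incident_edges G v)"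
proof -
  have "incident_edges G v = (\<lambda>u. {v, u}) ` {u \<in> verts G. adj G v u}"
  proof (intro equalityI subsetI)
    fix e assume e: "e \<in> incident_edges G v"
    then have "e \<in> edges G" "v \<in> e" by (auto simp: incident_edges_def)
    then obtain u where "u \<noteq> v" "e = {v, u}" using card_edge card_2_obtain_other by metis
    then show "e \<in> (\<lambda>u. {v, u}) ` {u \<in> verts G. adj G v u}"
      using \<open>e \<in> edges G\<close> edge_subset_verts by (auto simp: adj_def)
  qed (auto simp: incident_edges_def adj_def)
  moreover have "inj_on (\<lambda>u. {v, u}) {u \<in> verts G. adj G v u}"
    by (auto intro!: inj_onI simp: adj_def doubleton_eq_iff)
  ultimately show ?thesis unfolding degree_def by (simp add: card_image)
qed

lemma incident_edges_Int_subset: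
  assumes "u \<noteq> v"
  shows "incident_edges G u \<inter> incident_edges G v \<subseteq> {{u, v}}"
proof
  fix e assume "e \<in> incident_edges G u \<inter> incident_edges G v"
  then have "card e = 2" "u \<in> e" "v \<in> e" using card_edge by (auto simp: incident_edges_def)
  then obtain w where "e = {u, w}" by (metis card_2_obtain_other)
  then show "e \<in> {{u, v}}" using \<open>v \<in> e\<close> \<open>u \<noteq> v\<close> by auto
qed

lemma card_le_1_if_subset_incident_edges:
  assumes "u \<noteq> v" "X \<subseteq> incident_edges G u" "X \<subseteq> incident_edges G v"
  shows "card X \<le> 1"
  using card_mono[of "{{u, v}}" X] incident_edges_Int_subset[OF \<open>u \<noteq> v\<close>] assms(2,3) by auto

lemma adj_iff_incident_edges_meet:
  assumes "u \<noteq> v"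
  shows "adj G u v \<longleftrightarrow> incident_edges G u \<inter> incident_edges G v \<noteq> {}"
  using incident_edges_Int_subset[OF assms] assms by (auto simp: adj_def incident_edges_def)

lemma inj_on_incident_edges: "inj_on (incident_edges G) {v. 2 \<le> degree G v}"
proof (rule inj_onI)
  fix u v assume "u \<in> {v. 2 \<le> degree G v}" "incident_edges G u = incident_edges G v"
  then show "u = v"
    using card_le_1_if_subset_incident_edges[of u v "incident_edges G u"]
    by (auto simp: degree_eq_card_incident_edges)
qed

lemma degree_less_card_verts:
  assumes "v \<in> verts G"
  shows "degree G v < card (verts G)"
proof -
  have "{u \<in> verts G. adj G v u} \<subseteq> verts G - {v}" by (auto simp: adj_def)
  then have "degree G v \<le> card (verts G - {v})"
    unfolding degree_def using finite_verts by (intro card_mono) auto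
  also have "\<dots> < card (verts G)" by (rule card_Diff1_less[OF finite_verts assms])
  finally show ?thesis .
qed

section \<open>The \<omega>-cliques of the line graph\<close>

lemma subset_incident_edges_in_line_clique_graph:
  assumes "K \<subseteq> incident_edges G c" "card K = \<omega>"
  shows "K \<in> verts (line_clique_graph \<omega> G)"
  using assms finite_subset[OF assms(1) finite_incident_edges]
  unfolding verts_clique_graph is_clique_def verts_line_graph adj_line_graph incident_edges_def
  by blast

lemma line_clique_graph_vertexE:
  assumes "4 \<le> \<omega>" "K \<in> verts (line_clique_graph \<omega> G)"
  obtains c where "c \<in> verts G" "K \<subseteq> incident_edges G c" "card K = \<omega>"
proof -
  have clique: "is_clique (line_graph G) K" and "card K = \<omega>"
    using assms(2) by (simp_all add: verts_clique_graph)
  then have K: "K \<subseteq> edges G" by (simp add: is_clique_def verts_line_graph)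
  have meet: "\<And>e e'. e \<in> K \<Longrightarrow> e' \<in> K \<Longrightarrow> e \<noteq> e' \<Longrightarrow> e \<inter> e' \<noteq> {}"
    using clique by (simp add: is_clique_def adj_line_graph)
  have doubletons: "\<And>e. e \<in> K \<Longrightarrow> card e = 2" using K card_edge by blast
  obtain c where c: "\<forall>e\<in>K. c \<in> e"
    using pairwise_meeting_doubletons_common_point[of K, OF doubletons meet] \<open>card K = \<omega>\<close> assms(1)
    by auto
  obtain e where "e \<in> K" using \<open>card K = \<omega>\<close> assms(1) by fastforce
  then have "c \<in> verts G" using c K edge_subset_verts by blast
  then show thesis using that c K \<open>card K = \<omega>\<close> by (auto simp: incident_edges_def)
qed

lemma finite_line_clique_graph: "finite (verts (line_clique_graph \<omega> G))"
proof (rule finite_subset)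
  show "verts (line_clique_graph \<omega> G) \<subseteq> Pow (edges G)"
    by (auto simp: verts_clique_graph is_clique_def verts_line_graph)
qed (simp add: finite_edges)

lemma degree_line_clique_graph_ge:
  assumes "2 \<le> \<omega>" and K: "K \<subseteq> incident_edges G v" "card K = \<omega>"
    and N: "N \<subseteq> verts (line_clique_graph \<omega> G)"
    and meet: "\<And>K'. K' \<in> N \<Longrightarrow> K \<inter> K' \<noteq> {}"
    and outside: "\<And>K'. K' \<in> N \<Longrightarrow> \<not> K' \<subseteq> incident_edges G v"
  shows "\<omega> * (card (incident_edges G v) - \<omega>) + card N \<le> degree (line_clique_graph \<omega> G) K"
proof -
  \<comment> \<open>Besides N, K is adjacent to the \<omega>(d(v) - \<omega>) cliques obtained by exchanging one of its
    edges for another edge at v; these stay inside the star of v, so they are not in N.\<close>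
  let ?C = "line_clique_graph \<omega> G" and ?S = "incident_edges G v"
  let ?nbrs = "{K' \<in> verts ?C. adj ?C K K'}"
  define F where "F = (\<lambda>(x, y). insert y (K - {x})) ` (K \<times> (?S - K))"
  have fin: "finite ?S" "finite K" using finite_incident_edges K(1) finite_subset by blast+
  have KC: "K \<in> verts ?C" using K by (rule subset_incident_edges_in_line_clique_graph)
  have "card (?S - K) = card ?S - \<omega>" using K fin by (simp add: card_Diff_subset)
  then have card_F: "card F = \<omega> * (card ?S - \<omega>)"
    unfolding F_def using K(2) by (simp add: card_image[OF inj_on_exchange] card_cartesian_product)
  have F_nbrs: "F \<subseteq> ?nbrs"
  proof
    fix Z assume "Z \<in> F"
    then obtain x y where xy: "x \<in> K" "y \<in> ?S" "y \<notin> K" "Z = insert y (K - {x})"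
      unfolding F_def by auto
    have card_Kx: "card (K - {x}) = \<omega> - 1" using xy K fin by simp
    then have "K - {x} \<noteq> {}" using \<open>2 \<le> \<omega>\<close> by (intro notI) simp
    have "card Z = \<omega>" using card_Kx xy fin \<open>2 \<le> \<omega>\<close> by auto
    moreover have "Z \<subseteq> ?S" using xy K by auto
    ultimately have "Z \<in> verts ?C" using subset_incident_edges_in_line_clique_graph by blast
    then show "Z \<in> ?nbrs" using KC xy \<open>K - {x} \<noteq> {}\<close> by (auto simp: adj_clique_graph)
  qed
  have N_nbrs: "N \<subseteq> ?nbrs" using N meet outside KC K(1) by (auto simp: adj_clique_graph)
  have "F \<inter> N = {}" using outside K(1) unfolding F_def by blast
  then have "card F + card N = card (F \<union> N)"
    using F_nbrs N_nbrs finite_line_clique_graph by (intro card_Un_disjoint[symmetric]) (auto intro: finite_subset)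
  also have "\<dots> \<le> card ?nbrs"
    using F_nbrs N_nbrs finite_line_clique_graph by (intro card_mono) auto
  finally show ?thesis using card_F by (simp add: degree_def)
qed

lemma line_clique_graph_eq_stars:
  assumes "4 \<le> \<omega>" "\<forall>u\<in>verts G. degree G u \<le> \<omega>"
  shows "verts (line_clique_graph \<omega> G) = incident_edges G ` {c \<in> verts G. degree G c = \<omega>}"
proof (intro equalityI subsetI)
  fix K assume "K \<in> verts (line_clique_graph \<omega> G)"
  then obtain c where c: "c \<in> verts G" "K \<subseteq> incident_edges G c" "card K = \<omega>"
    using line_clique_graph_vertexE[OF assms(1)] by blast
  have "card (incident_edges G c) \<le> \<omega>"
    using assms(2) c(1) by (simp add: degree_eq_card_incident_edges)
  then have "K = incident_edges G c" using card_seteq[OF finite_incident_edges c(2)] c(3) by simp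
  then show "K \<in> incident_edges G ` {c \<in> verts G. degree G c = \<omega>}"
    using c by (auto simp: degree_eq_card_incident_edges)
qed (auto intro: subset_incident_edges_in_line_clique_graph simp: degree_eq_card_incident_edges)

lemma graph_iso_line_clique_graph_if_regular:
  assumes "4 \<le> \<omega>" "regular \<omega> G"
  shows "graph_iso (line_clique_graph \<omega> G) G"
proof -
  let ?C = "line_clique_graph \<omega> G" and ?S = "incident_edges G"
  have deg: "\<forall>u\<in>verts G. degree G u = \<omega>" using assms(2) by (simp add: regular_def)
  then have "{c \<in> verts G. degree G c = \<omega>} = verts G" by auto
  then have stars: "verts ?C = ?S ` verts G"
    using line_clique_graph_eq_stars[OF assms(1)] deg by simp
  have inj: "inj_on ?S (verts G)"
    by (rule inj_on_subset[OF inj_on_incident_edges]) (use deg assms(1) in auto)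
  have "adj G a b \<longleftrightarrow> adj ?C (?S a) (?S b)" if "a \<in> verts G" "b \<in> verts G" for a b
  proof (cases "a = b")
    case False
    then have "?S a \<noteq> ?S b" using inj that by (meson inj_on_contraD)
    then show ?thesis using False that stars by (simp add: adj_iff_incident_edges_meet adj_clique_graph)
  qed (simp add: adj_def adj_clique_graph)
  then have "graph_iso G ?C" unfolding graph_iso_def bij_betw_def using inj stars by blast
  then show ?thesis by (rule graph_iso_sym)
qed

lemma not_adj_if_degrees_Suc:
  assumes "4 \<le> \<omega>"
    and bound: "\<And>K. K \<in> verts (line_clique_graph \<omega> G) \<Longrightarrow> degree (line_clique_graph \<omega> G) K \<le> \<omega> + 1"
    and "degree G a = \<omega> + 1" "degree G b = \<omega> + 1"
  shows "\<not> adj G a b"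
proof
  assume "adj G a b"
  let ?S = "incident_edges G"
  have "a \<noteq> b" using \<open>adj G a b\<close> by (rule adj_imp_neq)
  have ab: "{a, b} \<in> ?S a" "{a, b} \<in> ?S b"
    using \<open>adj G a b\<close> by (auto simp: adj_def incident_edges_def)
  have card_S: "card (?S a) = \<omega> + 1" "card (?S b) = \<omega> + 1"
    using assms(3,4) by (simp_all add: degree_eq_card_incident_edges)
  then have "card (?S b - {{a, b}}) = \<omega>" using ab(2) finite_incident_edges by simp
  then have "?S b - {{a, b}} \<noteq> {}" using assms(1) by (intro notI) simp
  then obtain e where e: "e \<in> ?S b" "e \<noteq> {a, b}" by blast
  define K where "K = ?S b - {e}"
  define N where "N = (\<lambda>h. ?S a - {h}) ` (?S a - {{a, b}})"
  have K: "K \<subseteq> ?S b" "card K = \<omega>" using card_S e finite_incident_edges by (auto simp: K_def)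
  have card_N: "card N = \<omega>"
  proof -
    have "card N = card (?S a - {{a, b}})" unfolding N_def by (intro card_image inj_onI) blast
    then show ?thesis using card_S ab(1) finite_incident_edges by simp
  qed
  have N: "K' \<subseteq> ?S a" "card K' = \<omega>" "{a, b} \<in> K'" if "K' \<in> N" for K'
    using that card_S ab(1) finite_incident_edges by (auto simp: N_def)
  have "\<omega> * (card (?S b) - \<omega>) + card N \<le> degree (line_clique_graph \<omega> G) K"
  proof (rule degree_line_clique_graph_ge)
    show "N \<subseteq> verts (line_clique_graph \<omega> G)"
    proof
      fix K' assume "K' \<in> N"
      from N(1,2)[OF this] show "K' \<in> verts (line_clique_graph \<omega> G)"
        by (rule subset_incident_edges_in_line_clique_graph)
    qed
    show "K \<inter> K' \<noteq> {}" if "K' \<in> N" for K'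
      using N(3)[OF that] ab(2) e(2) by (auto simp: K_def)
    show "\<not> K' \<subseteq> ?S b" if "K' \<in> N" for K'
    proof
      assume "K' \<subseteq> ?S b"
      with N(1)[OF that] have "card K' \<le> 1"
        by (rule card_le_1_if_subset_incident_edges[OF \<open>a \<noteq> b\<close>])
      then show False using N(2)[OF that] assms(1) by simp
    qed
  qed (use K assms(1) in auto)
  also have "\<dots> \<le> \<omega> + 1" by (rule bound[OF subset_incident_edges_in_line_clique_graph[OF K]])
  finally show False using card_S card_N assms(1) by simp
qed

end

section \<open>An isomorphism forces regularity\<close>

locale line_clique_graph_iso =
  fixes G :: "'a graph" and \<omega> :: nat and f :: "'a set set \<Rightarrow> 'a"
  assumes simple: "simple_graph G" and omega: "4 \<le> \<omega>"
    and bij: "bij_betw f (verts (line_clique_graph \<omega> G)) (verts G)"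
    and adj_iff: "\<forall>K\<in>verts (line_clique_graph \<omega> G). \<forall>K'\<in>verts (line_clique_graph \<omega> G).
      adj (line_clique_graph \<omega> G) K K' \<longleftrightarrow> adj G (f K) (f K')"
begin

abbreviation C :: "'a set set graph" where "C \<equiv> line_clique_graph \<omega> G"
abbreviation S :: "'a \<Rightarrow> 'a set set" where "S \<equiv> incident_edges G"

lemma degree_image_eq: "K \<in> verts C \<Longrightarrow> degree C K = degree G (f K)"
  using degree_graph_iso[OF bij adj_iff] by simp

lemma degree_line_clique_graph_bounded:
  assumes "\<And>u. u \<in> verts G \<Longrightarrow> degree G u \<le> d" "K \<in> verts C"
  shows "degree C K \<le> d"
  using assms bij degree_image_eq by (metis bij_betwE)

lemma star_subset_in_verts: "K \<subseteq> S v \<Longrightarrow> card K = \<omega> \<Longrightarrow> K \<in> verts C"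
  by (rule subset_incident_edges_in_line_clique_graph[OF simple])

lemma card_star: "card (S v) = degree G v"
  by (simp add: degree_eq_card_incident_edges[OF simple])

lemma max_degree_le_Suc_omega:
  assumes max: "\<And>u. u \<in> verts G \<Longrightarrow> degree G u \<le> degree G v"
  shows "degree G v \<le> \<omega> + 1"
proof (rule ccontr)
  define k where "k = degree G v - \<omega>"
  assume "\<not> degree G v \<le> \<omega> + 1"
  then have k: "degree G v = \<omega> + k" "2 \<le> k" by (simp_all add: k_def)
  then have "\<omega> \<le> card (S v)" by (simp add: card_star)
  then obtain K where K: "K \<subseteq> S v" "card K = \<omega>" by (rule obtain_subset_with_card_n)
  have "\<omega> * (card (S v) - \<omega>) \<le> degree C K"
    using degree_line_clique_graph_ge[OF simple _ K, of "{}"] omega by simp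
  also have "\<dots> \<le> degree G v" by (rule degree_line_clique_graph_bounded[OF max star_subset_in_verts[OF K]])
  finally have "\<omega> * k \<le> \<omega> + k" using k by (simp add: card_star)
  moreover have "\<omega> * 2 \<le> \<omega> * k" using k(2) by (rule mult_le_mono2)
  moreover have "4 * k \<le> \<omega> * k" using omega by (rule mult_le_mono1)
  ultimately show False using k(2) by linarith
qed

lemma neighbour_degree_less:
  assumes bound: "\<And>u. u \<in> verts G \<Longrightarrow> degree G u \<le> \<omega> + 1"
    and dv: "degree G v = \<omega> + 1" and vu: "adj G v u"
  shows "degree G u < \<omega>"
proof (rule ccontr)
  assume "\<not> degree G u < \<omega>"
  have bound_C: "\<And>K. K \<in> verts C \<Longrightarrow> degree C K \<le> \<omega> + 1"
    by (rule degree_line_clique_graph_bounded[OF bound])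
  have no_adj: "\<not> adj G a b" if "degree G a = \<omega> + 1" "degree G b = \<omega> + 1" for a b
    by (rule not_adj_if_degrees_Suc[OF simple omega]) (use bound_C that in auto)
  have "u \<in> verts G" by (rule adj_in_verts[OF simple vu])
  have "u \<noteq> v" using adj_imp_neq[OF vu] by simp
  have "degree G u \<noteq> \<omega> + 1" using no_adj[OF dv] vu by blast
  then have du: "degree G u = \<omega>" using bound[OF \<open>u \<in> verts G\<close>] \<open>\<not> degree G u < \<omega>\<close> by simp
  let ?e0 = "{v, u}"
  have e0: "?e0 \<in> S v" "?e0 \<in> S u" using vu by (auto simp: adj_def incident_edges_def)
  have Su: "S u \<in> verts C" using star_subset_in_verts[OF subset_refl] du by (simp add: card_star)
  have Su_outside: "\<not> S u \<subseteq> S v"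
  proof
    assume "S u \<subseteq> S v"
    then have "card (S u) \<le> 1"
      by (rule card_le_1_if_subset_incident_edges[OF simple \<open>u \<noteq> v\<close> subset_refl])
    then show False using du omega by (simp add: card_star)
  qed
  have fin: "finite (S v)" by (rule finite_incident_edges[OF simple])
  have removed: "S v - {e} \<subseteq> S v" "card (S v - {e}) = \<omega>" "S v - {e} \<in> verts C"
    if "e \<in> S v" for e
    using that fin dv by (auto simp: card_star intro: star_subset_in_verts)
  have big: "degree G (f (S v - {e})) = \<omega> + 1" if e: "e \<in> S v" "e \<noteq> ?e0" for e
  proof -
    have "\<omega> * (card (S v) - \<omega>) + card {S u} \<le> degree C (S v - {e})"
      by (rule degree_line_clique_graph_ge[OF simple _ removed(1,2)[OF e(1)]])
        (use omega Su e0 e Su_outside in auto)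
    then have "\<omega> + 1 \<le> degree C (S v - {e})" using dv by (simp add: card_star)
    moreover have "degree C (S v - {e}) \<le> \<omega> + 1" by (rule bound_C[OF removed(3)[OF e(1)]])
    ultimately show ?thesis using degree_image_eq[OF removed(3)[OF e(1)]] by simp
  qed
  have "card (S v - {?e0}) = \<omega>" using e0 fin dv by (simp add: card_star)
  then have "S v - {?e0} \<noteq> {}" using omega by (intro notI) simp
  then obtain e1 where e1: "e1 \<in> S v" "e1 \<noteq> ?e0" by blast
  have "card (S v - {?e0, e1}) = \<omega> - 1" using e0 e1 fin dv by (simp add: card_star)
  then have "S v - {?e0, e1} \<noteq> {}" using omega by (intro notI) simp
  then obtain e2 where e2: "e2 \<in> S v" "e2 \<noteq> ?e0" "e2 \<noteq> e1" by blast
  have "card (S v - {e1, e2}) = \<omega> - 1" using e1 e2 fin dv by (simp add: card_star)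
  then have "S v - {e1, e2} \<noteq> {}" using omega by (intro notI) simp
  then have "adj C (S v - {e1}) (S v - {e2})"
    unfolding adj_clique_graph using removed(3) e1 e2 by blast
  then have "adj G (f (S v - {e1})) (f (S v - {e2}))"
    using adj_iff removed(3) e1(1) e2(1) by blast
  then show False using no_adj[OF big[OF e1] big[OF e2(1,2)]] by contradiction
qed

lemma removal_cliques_closed:
  assumes bound: "\<And>u. u \<in> verts G \<Longrightarrow> degree G u \<le> \<omega> + 1" and dv: "degree G v = \<omega> + 1"
    and K: "K \<in> (\<lambda>h. S v - {h}) ` S v" and KK': "adj C K K'"
  shows "K' \<in> (\<lambda>h. S v - {h}) ` S v"
proof -
  have "K' \<in> verts C" using KK' by (simp add: adj_clique_graph)
  then obtain c where c: "c \<in> verts G" "K' \<subseteq> S c" "card K' = \<omega>"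
    by (rule line_clique_graph_vertexE[OF simple omega])
  obtain g where g: "g \<in> K" "g \<in> K'" using KK' by (auto simp: adj_clique_graph)
  have "g \<in> S v" using g(1) K by auto
  have "c = v"
  proof (rule ccontr)
    assume "c \<noteq> v"
    have "S v \<inter> S c \<noteq> {}" using \<open>g \<in> S v\<close> g(2) c(2) by blast
    then have "adj G v c" using adj_iff_incident_edges_meet[OF simple, of v c] \<open>c \<noteq> v\<close> by simp
    then have "degree G c < \<omega>" using bound dv by (intro neighbour_degree_less)
    moreover have "\<omega> \<le> degree G c"
      using card_mono[OF finite_incident_edges[OF simple] c(2)] c(3) by (simp add: card_star)
    ultimately show False by simp
  qed
  have fin: "finite (S v)" by (rule finite_incident_edges[OF simple])
  have "card (S v - K') = 1"
    using c \<open>c = v\<close> fin dv finite_subset[OF c(2)] by (simp add: card_Diff_subset card_star)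
  then obtain h where "S v - K' = {h}" by (rule card_1_singletonE)
  then have "K' = S v - {h}" "h \<in> S v" using c(2) \<open>c = v\<close> by auto
  then show ?thesis by blast
qed

lemma degree_ne_Suc_omega:
  assumes conn: "connected_graph G" and bound: "\<And>u. u \<in> verts G \<Longrightarrow> degree G u \<le> \<omega> + 1"
    and v: "v \<in> verts G"
  shows "degree G v \<noteq> \<omega> + 1"
proof
  assume dv: "degree G v = \<omega> + 1"
  have fin: "finite (S v)" by (rule finite_incident_edges[OF simple])
  define A where "A = (\<lambda>h. S v - {h}) ` S v"
  have A_verts: "A \<subseteq> verts C"
  proof
    fix K assume "K \<in> A"
    then obtain h where "h \<in> S v" "K = S v - {h}" by (auto simp: A_def)
    then show "K \<in> verts C" using fin dv by (intro star_subset_in_verts) (auto simp: card_star)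
  qed
  have "verts G \<subseteq> f ` A"
  proof -
    have "S v \<noteq> {}" using dv by (intro notI) (simp add: card_star[symmetric])
    then obtain K where "K \<in> A" by (auto simp: A_def)
    then have K: "f K \<in> verts G" "f K \<in> f ` A" using A_verts bij_betwE[OF bij] by blast+
    have "z \<in> f ` A" if "y \<in> f ` A" "adj G y z" for y z
    proof -
      obtain K where K: "K \<in> A" "y = f K" using \<open>y \<in> f ` A\<close> by blast
      have "z \<in> f ` verts C"
        using adj_in_verts[OF simple \<open>adj G y z\<close>] bij_betw_imp_surj_on[OF bij] by simp
      then obtain K' where K': "K' \<in> verts C" "z = f K'" by blast
      have "adj C K K' \<longleftrightarrow> adj G (f K) (f K')" using adj_iff K(1) K'(1) A_verts by blast
      then have "adj C K K'" using \<open>adj G y z\<close> K(2) K'(2) by simp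
      then show ?thesis using removal_cliques_closed[OF bound dv] K(1) K'(2) by (auto simp: A_def)
    qed
    then show ?thesis using connected_graph_closed_superset[OF conn K] by blast
  qed
  then have "card (verts G) \<le> card (f ` A)" using fin by (intro card_mono) (simp_all add: A_def)
  also have "\<dots> \<le> card A" by (rule card_image_le) (simp add: A_def fin)
  also have "\<dots> \<le> card (S v)" unfolding A_def using fin by (rule card_image_le)
  finally have "card (verts G) \<le> degree G v" by (simp add: card_star)
  then show False using degree_less_card_verts[OF simple v] by simp
qed

lemma regular_if_degree_le_omega:
  assumes "\<forall>u\<in>verts G. degree G u \<le> \<omega>"
  shows "regular \<omega> G"
proof -
  let ?R = "{c \<in> verts G. degree G c = \<omega>}"
  have fin: "finite ?R" using finite_verts[OF simple] by simp
  have "card (verts G) = card (verts C)" using bij_betw_same_card[OF bij] by simp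
  also have "\<dots> \<le> card ?R"
    unfolding line_clique_graph_eq_stars[OF simple omega assms] using fin by (rule card_image_le)
  finally have "?R = verts G" by (intro card_seteq[OF finite_verts[OF simple]]) auto
  then show ?thesis by (auto simp: regular_def)
qed

lemma regular_if_connected:
  assumes conn: "connected_graph G"
  shows "regular \<omega> G"
proof -
  have fin: "finite (degree G ` verts G)" using finite_verts[OF simple] by simp
  have "verts G \<noteq> {}" using conn by (simp add: connected_graph_def)
  then have "Max (degree G ` verts G) \<in> degree G ` verts G" using fin by (intro Max_in) auto
  then obtain v where v: "v \<in> verts G" "degree G v = Max (degree G ` verts G)" by auto
  have max: "\<And>u. u \<in> verts G \<Longrightarrow> degree G u \<le> degree G v"
    unfolding v(2) using fin by (simp add: Max_ge)
  have dv: "degree G v \<le> \<omega> + 1" by (rule max_degree_le_Suc_omega[OF max])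
  have bound: "\<And>u. u \<in> verts G \<Longrightarrow> degree G u \<le> \<omega> + 1" using max dv le_trans by blast
  have "degree G v \<noteq> \<omega> + 1" by (rule degree_ne_Suc_omega[OF conn bound v(1)])
  then have "degree G v \<le> \<omega>" using dv by simp
  then have "\<forall>u\<in>verts G. degree G u \<le> \<omega>" using max le_trans by blast
  then show ?thesis by (rule regular_if_degree_le_omega)
qed

end

theorem theorem5:
  fixes \<Gamma> :: "'a graph" and \<omega> :: nat
  assumes "\<omega> \<ge> 4" and "simple_graph \<Gamma>" and "connected_graph \<Gamma>"
  shows "graph_iso (clique_graph \<omega> (line_graph \<Gamma>)) \<Gamma> \<longleftrightarrow> regular \<omega> \<Gamma>"
proof
  assume "graph_iso (clique_graph \<omega> (line_graph \<Gamma>)) \<Gamma>"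
  then obtain f where "line_clique_graph_iso \<Gamma> \<omega> f"
    using assms(1,2) unfolding graph_iso_def line_clique_graph_iso_def by blast
  then show "regular \<omega> \<Gamma>" using assms(3) by (rule line_clique_graph_iso.regular_if_connected)
next
  assume "regular \<omega> \<Gamma>"
  then show "graph_iso (clique_graph \<omega> (line_graph \<Gamma>)) \<Gamma>"
    by (rule graph_iso_line_clique_graph_if_regular[OF assms(2,1)])
qed

end
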